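(* Let $f \in \mathbb{R}[\bar X, \bar Y]$, $\bar X=(X_1,\dots,X_n)$, $\bar Y=(Y_1,\dots,Y_r)$, with $\deg_{\bar X} f = d$ and $\deg_{\bar Y} f = m$. Then for every $\bar x_1, \bar x_2 \in \widetilde\Delta_n$ and every $(\bar y, z)\in C^r$, $$|\bar f(\bar x_1, \bar y, z) - \bar f(\bar x_2, \bar y, z)| \le \frac12 \sqrt{n}\, \|f\|_\bullet \binom{m+r}{r} d(d+1)\, \|\bar x_1 - \bar x_2\|,$$ where $\|\cdot\|$ on $\mathbb{R}^n$ is the Euclidean norm.
   Context: $\widetilde\Delta_n = \{\bar x\in\mathbb{R}^n \mid \sum_i x_i \le 1,\ x_i\ge 0 \text{ for } 1\le i\le n\}$. $C^r = \{(\bar y, z)\in\mathbb{R}^{r+1} \mid y_1^2+\dots+y_r^2+z^2 = 1\}$. For $f = \sum_{\beta\in\mathbb{N}_0^r, |\beta|\le m} f_\beta(\bar X)\bar Y^\beta$ with $\deg_{\bar Y} f = m$, $\bar f = \sum_{|\beta|\le m} f_\beta(\bar X)\bar Y^\beta Z^{m-|\beta|}$ is its homogenization with respect to $\bar Y$ only. The norm $\|\cdot\|_\bullet$: writing $f = \sum_{|\beta|\le m}\sum_{\alpha\in\mathbb{N}_0^n, |\alpha|\le d}\binom{|\alpha|}{\alpha} a_{\alpha,\beta}\bar X^\alpha \bar Y^\beta$, where $|\alpha|=\alpha_1+\dots+\alpha_n$ and $\binom{|\alpha|}{\alpha} = \frac{|\alpha|!}{\alpha_1!\cdots\alpha_n!}$,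 set $\|f\|_\bullet = \max |a_{\alpha,\beta}|$. *)

theory Defs
  imports Complex_Main
begin

text \<open>Polynomials f in R[X_1..X_n, Y_1..Y_r] are represented by their coefficient
  function F :: (nat \<Rightarrow> nat) \<Rightarrow> (nat \<Rightarrow> nat) \<Rightarrow> real, where F alpha beta is the
  coefficient of X^alpha Y^beta; multi-indices are functions nat \<Rightarrow> nat supported on {..<n}.
  Points of R^n are functions nat \<Rightarrow> real, only the coordinates below n matter.\<close>

definition midx :: "nat \<Rightarrow> (nat \<Rightarrow> nat) set" where
  "midx n = {\<alpha>. \<forall>i. n \<le> i \<longrightarrow> \<alpha> i = 0}"

definition mdeg :: "nat \<Rightarrow> (nat \<Rightarrow> nat) \<Rightarrow> nat" where
  "mdeg n \<alpha> = (\<Sum>i<n. \<alpha> i)"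

definition midx_le :: "nat \<Rightarrow> nat \<Rightarrow> (nat \<Rightarrow> nat) set" where
  "midx_le n k = {\<alpha> \<in> midx n. mdeg n \<alpha> \<le> k}"

definition is_poly :: "nat \<Rightarrow> nat \<Rightarrow> ((nat \<Rightarrow> nat) \<Rightarrow> (nat \<Rightarrow> nat) \<Rightarrow> real) \<Rightarrow> bool" where
  "is_poly n r F \<longleftrightarrow> finite {(\<alpha>, \<beta>). F \<alpha> \<beta> \<noteq> 0} \<and>
     (\<forall>\<alpha> \<beta>. F \<alpha> \<beta> \<noteq> 0 \<longrightarrow> \<alpha> \<in> midx n \<and> \<beta> \<in> midx r)"

definition degX :: "nat \<Rightarrow> ((nat \<Rightarrow> nat) \<Rightarrow> (nat \<Rightarrow> nat) \<Rightarrow> real) \<Rightarrow> nat \<Rightarrow> bool" where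
  "degX n F d \<longleftrightarrow> (\<forall>\<alpha> \<beta>. F \<alpha> \<beta> \<noteq> 0 \<longrightarrow> mdeg n \<alpha> \<le> d) \<and> (\<exists>\<alpha> \<beta>. F \<alpha> \<beta> \<noteq> 0 \<and> mdeg n \<alpha> = d)"

definition degY :: "nat \<Rightarrow> ((nat \<Rightarrow> nat) \<Rightarrow> (nat \<Rightarrow> nat) \<Rightarrow> real) \<Rightarrow> nat \<Rightarrow> bool" where
  "degY r F m \<longleftrightarrow> (\<forall>\<alpha> \<beta>. F \<alpha> \<beta> \<noteq> 0 \<longrightarrow> mdeg r \<beta> \<le> m) \<and> (\<exists>\<alpha> \<beta>. F \<alpha> \<beta> \<noteq> 0 \<and> mdeg r \<beta> = m)"

definition multinom :: "nat \<Rightarrow> (nat \<Rightarrow> nat) \<Rightarrow> real" where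
  "multinom n \<alpha> = fact (mdeg n \<alpha>) / (\<Prod>i<n. fact (\<alpha> i))"

text \<open>||f||_bullet = max |a_{alpha,beta}| where F alpha beta = multinom alpha * a_{alpha,beta}.\<close>
definition bnorm :: "nat \<Rightarrow> nat \<Rightarrow> nat \<Rightarrow> nat \<Rightarrow> ((nat \<Rightarrow> nat) \<Rightarrow> (nat \<Rightarrow> nat) \<Rightarrow> real) \<Rightarrow> real" where
  "bnorm n r d m F = Max {\<bar>F \<alpha> \<beta> / multinom n \<alpha>\<bar> | \<alpha> \<beta>. \<alpha> \<in> midx_le n d \<and> \<beta> \<in> midx_le r m}"

definition monom_eval :: "nat \<Rightarrow> (nat \<Rightarrow> real) \<Rightarrow> (nat \<Rightarrow> nat) \<Rightarrow> real" where
  "monom_eval n x \<alpha> = (\<Prod>i<n. x i ^ \<alpha> i)"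

definition homog :: "nat \<Rightarrow> nat \<Rightarrow> nat \<Rightarrow> nat \<Rightarrow> ((nat \<Rightarrow> nat) \<Rightarrow> (nat \<Rightarrow> nat) \<Rightarrow> real)
    \<Rightarrow> (nat \<Rightarrow> real) \<Rightarrow> (nat \<Rightarrow> real) \<Rightarrow> real \<Rightarrow> real" where
  "homog n r d m F x y z = (\<Sum>\<alpha>\<in>midx_le n d. \<Sum>\<beta>\<in>midx_le r m.
      F \<alpha> \<beta> * monom_eval n x \<alpha> * monom_eval r y \<beta> * z ^ (m - mdeg r \<beta>))"

definition simplex_le :: "nat \<Rightarrow> (nat \<Rightarrow> real) set" where
  "simplex_le n = {x. (\<forall>i<n. 0 \<le> x i) \<and> (\<Sum>i<n. x i) \<le> 1}"

definition sphereC :: "nat \<Rightarrow> ((nat \<Rightarrow> real) \<times> real) set" where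
  "sphereC r = {(y, z). (\<Sum>j<r. (y j)\<^sup>2) + z\<^sup>2 = 1}"

definition enorm :: "nat \<Rightarrow> (nat \<Rightarrow> real) \<Rightarrow> real" where
  "enorm n x = sqrt (\<Sum>i<n. (x i)\<^sup>2)"

end

theory Submission
  imports Defs "HOL-Analysis.Convex"
begin

text \<open>Group the X-monomials by total degree k and let D k be the sum of
  multinom a * |x1^a - x2^a| over |a| = k. The recursion multinom a = sum over i of
  multinom (a - e_i), together with x^(g + e_i) = x_i * x^g, gives
  D (k+1) <= (sum_i x1_i) * D k + |x1 - x2|_1 * (sum_i x2_i)^k, hence D k <= k * |x1 - x2|_1
  on the simplex. Every coefficient is at most the bullet norm times its multinomial, the
  homogenized Y-monomials are bounded by 1 on C^r and there are at most (m+r choose r) of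
  them; summing over k <= d and using |v|_1 <= sqrt n * |v|_2 gives the bound.\<close>

definition midx_eq :: "nat \<Rightarrow> nat \<Rightarrow> (nat \<Rightarrow> nat) set" where
  "midx_eq n k = {\<alpha> \<in> midx n. mdeg n \<alpha> = k}"

lemma finite_midx_le: "finite (midx_le n d)"
proof -
  have "midx_le n d \<subseteq> {f. \<forall>i. (i \<in> {..<n} \<longrightarrow> f i \<in> {..d}) \<and> (i \<notin> {..<n} \<longrightarrow> f i = 0)}"
  proof
    fix \<alpha> assume \<alpha>: "\<alpha> \<in> midx_le n d"
    have "\<alpha> i \<le> d" if "i < n" for i
    proof -
      have "\<alpha> i \<le> mdeg n \<alpha>" unfolding mdeg_def by (rule member_le_sum) (use that in auto)
      with \<alpha> show ?thesis by (simp add: midx_le_def)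
    qed
    with \<alpha> show "\<alpha> \<in> {f. \<forall>i. (i \<in> {..<n} \<longrightarrow> f i \<in> {..d}) \<and> (i \<notin> {..<n} \<longrightarrow> f i = 0)}"
      by (auto simp: midx_le_def midx_def)
  qed
  moreover have "finite {f. \<forall>i. (i \<in> {..<n} \<longrightarrow> f i \<in> {..d}) \<and> (i \<notin> {..<n} \<longrightarrow> f i = (0::nat))}"
    by (rule finite_set_of_finite_funs) auto
  ultimately show ?thesis by (rule finite_subset)
qed

lemma finite_midx_eq: "finite (midx_eq n k)"
  by (rule finite_subset[OF _ finite_midx_le[of n k]]) (auto simp: midx_eq_def midx_le_def)

lemma midx_eq_0: "midx_eq n 0 = {\<lambda>_. 0}"
  by (auto simp: midx_eq_def midx_def mdeg_def fun_eq_iff) (metis not_less lessThan_iff)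

lemma midx_le_0: "midx_le 0 m = {\<lambda>_. 0}"
  by (auto simp: midx_le_def midx_def mdeg_def)

lemma sum_midx_le_by_degree: "sum h (midx_le n d) = (\<Sum>k\<le>d. sum h (midx_eq n k))"
proof -
  have "midx_le n d = (\<Union>k\<le>d. midx_eq n k)"
    by (auto simp: midx_le_def midx_eq_def)
  moreover have "sum h (\<Union>k\<le>d. midx_eq n k) = (\<Sum>k\<le>d. sum h (midx_eq n k))"
    by (rule sum.UNION_disjoint) (auto simp: finite_midx_eq[unfolded midx_eq_def] midx_eq_def)
  ultimately show ?thesis by simp
qed

lemma sum_choose_shift: "(\<Sum>j\<le>m. (m - j + r) choose r) = (m + Suc r) choose Suc r"
proof -
  have "(\<Sum>j\<le>m. (m - j + r) choose r) = (\<Sum>k\<le>m. (r + k) choose k)"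
    by (rule sum.reindex_bij_witness[where i="\<lambda>k. m - k" and j="\<lambda>j. m - j"])
       (auto simp: add.commute binomial_symmetric[of r "m + r - _"])
  also have "\<dots> = Suc (r + m) choose m" by (rule sum_choose_lower)
  also have "\<dots> = (m + Suc r) choose Suc r"
    using binomial_symmetric[of m "Suc (r + m)"] by (simp add: add.commute)
  finally show ?thesis .
qed

lemma card_midx_le: "card (midx_le r m) \<le> (m + r) choose r"
proof (induction r arbitrary: m)
  case 0
  then show ?case by (simp add: midx_le_0)
next
  case (Suc r)
  let ?S = "SIGMA j:{..m}. midx_le r (m - j)"
  have "midx_le (Suc r) m \<subseteq> (\<lambda>(j, \<beta>). \<beta>(r := j)) ` ?S"
  proof
    fix \<beta> assume \<beta>: "\<beta> \<in> midx_le (Suc r) m"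
    have "mdeg r (\<beta>(r := 0)) = mdeg r \<beta>" unfolding mdeg_def by (rule sum.cong) auto
    moreover have "mdeg (Suc r) \<beta> = mdeg r \<beta> + \<beta> r" by (simp add: mdeg_def)
    ultimately have "(\<beta> r, \<beta>(r := 0)) \<in> ?S"
      using \<beta> by (auto simp: midx_le_def midx_def)
    moreover have "\<beta> = (\<lambda>(j, \<beta>). \<beta>(r := j)) (\<beta> r, \<beta>(r := 0))" by simp
    ultimately show "\<beta> \<in> (\<lambda>(j, \<beta>). \<beta>(r := j)) ` ?S" by (rule rev_image_eqI)
  qed
  moreover have "finite ?S" by (simp add: finite_midx_le)
  ultimately have "card (midx_le (Suc r) m) \<le> card ?S"
    by (meson card_image_le card_mono finite_imageI order_trans)
  also have "\<dots> = (\<Sum>j\<le>m. card (midx_le r (m - j)))" by (simp add: finite_midx_le)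
  also have "\<dots> \<le> (\<Sum>j\<le>m. (m - j + r) choose r)" by (intro sum_mono Suc.IH)
  also have "\<dots> = (m + Suc r) choose Suc r" by (rule sum_choose_shift)
  finally show ?case .
qed

lemma prod_lessThan_fun_upd:
  fixes h :: "nat \<Rightarrow> 'b \<Rightarrow> 'a::comm_monoid_mult"
  assumes "i < n"
  shows "(\<Prod>j<n. h j ((\<alpha>(i := v)) j)) = h i v * (\<Prod>j\<in>{..<n} - {i}. h j (\<alpha> j))"
proof -
  have "(\<Prod>j<n. h j ((\<alpha>(i := v)) j)) = h i v * (\<Prod>j\<in>{..<n} - {i}. h j ((\<alpha>(i := v)) j))"
    using assms by (simp add: prod.remove)
  also have "(\<Prod>j\<in>{..<n} - {i}. h j ((\<alpha>(i := v)) j)) = (\<Prod>j\<in>{..<n} - {i}. h j (\<alpha> j))"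
    by (rule prod.cong) auto
  finally show ?thesis .
qed

lemma sum_lessThan_fun_upd:
  fixes h :: "nat \<Rightarrow> 'b \<Rightarrow> 'a::comm_monoid_add"
  assumes "i < n"
  shows "(\<Sum>j<n. h j ((\<alpha>(i := v)) j)) = h i v + (\<Sum>j\<in>{..<n} - {i}. h j (\<alpha> j))"
proof -
  have "(\<Sum>j<n. h j ((\<alpha>(i := v)) j)) = h i v + (\<Sum>j\<in>{..<n} - {i}. h j ((\<alpha>(i := v)) j))"
    using assms by (simp add: sum.remove)
  also have "(\<Sum>j\<in>{..<n} - {i}. h j ((\<alpha>(i := v)) j)) = (\<Sum>j\<in>{..<n} - {i}. h j (\<alpha> j))"
    by (rule sum.cong) auto
  finally show ?thesis .
qed

lemma mdeg_fun_upd: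
  assumes "i < n"
  shows "mdeg n (\<alpha>(i := v)) + \<alpha> i = v + mdeg n \<alpha>"
  using sum_lessThan_fun_upd[OF assms, of "\<lambda>_ e. e" \<alpha> v] sum.remove[of "{..<n}" i \<alpha>] assms
  by (simp add: mdeg_def)

lemma midx_fun_upd: "i < n \<Longrightarrow> \<alpha> \<in> midx n \<Longrightarrow> \<alpha>(i := v) \<in> midx n"
  by (simp add: midx_def)

lemma monom_eval_fun_upd_Suc:
  assumes "i < n"
  shows "monom_eval n x (\<gamma>(i := Suc (\<gamma> i))) = x i * monom_eval n x \<gamma>"
  using prod_lessThan_fun_upd[OF assms, of "\<lambda>j e. x j ^ e" \<gamma> "Suc (\<gamma> i)"]
    prod.remove[of "{..<n}" i "\<lambda>j. x j ^ \<gamma> j"] assms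
  by (simp add: monom_eval_def)

lemma multinom_pos: "0 < multinom n \<alpha>"
  by (simp add: multinom_def prod_pos)

lemma multinom_fun_upd_pred:
  assumes "i < n" "0 < \<alpha> i" "mdeg n \<alpha> = Suc k"
  shows "multinom n (\<alpha>(i := \<alpha> i - 1)) = fact k * real (\<alpha> i) / (\<Prod>j<n. fact (\<alpha> j))"
proof -
  define R :: real where "R = (\<Prod>j\<in>{..<n} - {i}. fact (\<alpha> j))"
  have R: "0 < R" by (simp add: R_def prod_pos)
  have "(\<Prod>j<n. fact (\<alpha> j) :: real) = fact (\<alpha> i) * R"
    using assms(1) by (simp add: R_def prod.remove)
  also have "fact (\<alpha> i) = real (\<alpha> i) * fact (\<alpha> i - 1)"
    using assms(2) fact_reduce by auto
  finally have P: "(\<Prod>j<n. fact (\<alpha> j) :: real) = real (\<alpha> i) * fact (\<alpha> i - 1) * R" .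
  have "mdeg n (\<alpha>(i := \<alpha> i - 1)) = k"
    using mdeg_fun_upd[OF assms(1), of \<alpha> "\<alpha> i - 1"] assms(2,3) by simp
  then have "multinom n (\<alpha>(i := \<alpha> i - 1)) = fact k / (fact (\<alpha> i - 1) * R)"
    using prod_lessThan_fun_upd[OF assms(1), of "\<lambda>_ e. fact e :: real" \<alpha> "\<alpha> i - 1"]
    by (simp add: multinom_def R_def)
  also have "\<dots> = fact k * real (\<alpha> i) / (\<Prod>j<n. fact (\<alpha> j))"
    using assms(2) R by (simp add: P field_simps)
  finally show ?thesis .
qed

lemma multinom_Suc:
  assumes "mdeg n \<alpha> = Suc k"
  shows "multinom n \<alpha> = (\<Sum>i<n. if 0 < \<alpha> i then multinom n (\<alpha>(i := \<alpha> i - 1)) else 0)"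
proof -
  let ?P = "(\<Prod>j<n. fact (\<alpha> j) :: real)"
  have "(\<Sum>i<n. if 0 < \<alpha> i then multinom n (\<alpha>(i := \<alpha> i - 1)) else 0)
      = (\<Sum>i<n. fact k * real (\<alpha> i) / ?P)"
    by (rule sum.cong) (use multinom_fun_upd_pred[OF _ _ assms] in auto)
  also have "\<dots> = fact k * real (mdeg n \<alpha>) / ?P"
    by (simp add: mdeg_def sum_divide_distrib[symmetric] sum_distrib_left[symmetric])
  finally show ?thesis
    using assms by (simp add: multinom_def)
qed

lemma midx_eq_fun_upd_Suc:
  "\<gamma> \<in> midx_eq n k \<Longrightarrow> i < n \<Longrightarrow> \<gamma>(i := Suc (\<gamma> i)) \<in> midx_eq n (Suc k)"
  using mdeg_fun_upd[of i n \<gamma> "Suc (\<gamma> i)"] by (simp add: midx_eq_def midx_fun_upd)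

lemma midx_eq_fun_upd_pred:
  "\<alpha> \<in> midx_eq n (Suc k) \<Longrightarrow> i < n \<Longrightarrow> 0 < \<alpha> i \<Longrightarrow> \<alpha>(i := \<alpha> i - 1) \<in> midx_eq n k"
  using mdeg_fun_upd[of i n \<alpha> "\<alpha> i - 1"] by (simp add: midx_eq_def midx_fun_upd)

lemma sum_midx_eq_Suc:
  "(\<Sum>\<alpha>\<in>midx_eq n (Suc k). multinom n \<alpha> * W \<alpha>)
     = (\<Sum>i<n. \<Sum>\<gamma>\<in>midx_eq n k. multinom n \<gamma> * W (\<gamma>(i := Suc (\<gamma> i))))"
proof -
  let ?g = "\<lambda>(\<alpha>, i). multinom n (\<alpha>(i := \<alpha> i - 1)) * W \<alpha>"
  let ?S = "{p \<in> midx_eq n (Suc k) \<times> {..<n}. 0 < fst p (snd p)}"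
  have "(\<Sum>\<alpha>\<in>midx_eq n (Suc k). multinom n \<alpha> * W \<alpha>)
      = (\<Sum>\<alpha>\<in>midx_eq n (Suc k). \<Sum>i<n. if 0 < \<alpha> i then multinom n (\<alpha>(i := \<alpha> i - 1)) * W \<alpha> else 0)"
    by (rule sum.cong) (auto simp: multinom_Suc midx_eq_def sum_distrib_right intro!: sum.cong)
  also have "\<dots> = (\<Sum>p\<in>midx_eq n (Suc k) \<times> {..<n}. if 0 < fst p (snd p) then ?g p else 0)"
    unfolding sum.cartesian_product by (rule sum.cong) auto
  also have "\<dots> = sum ?g ?S"
    by (rule sum.inter_filter[symmetric]) (simp add: finite_midx_eq)
  also have "\<dots> = (\<Sum>(i, \<gamma>)\<in>{..<n} \<times> midx_eq n k. multinom n \<gamma> * W (\<gamma>(i := Suc (\<gamma> i))))"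
    by (rule sum.reindex_bij_witness[where i = "\<lambda>(i, \<gamma>). (\<gamma>(i := Suc (\<gamma> i)), i)"
                                      and j = "\<lambda>(\<alpha>, i). (i, \<alpha>(i := \<alpha> i - 1))"])
       (auto simp: midx_eq_fun_upd_Suc midx_eq_fun_upd_pred[simplified])
  also have "\<dots> = (\<Sum>i<n. \<Sum>\<gamma>\<in>midx_eq n k. multinom n \<gamma> * W (\<gamma>(i := Suc (\<gamma> i))))"
    by (simp add: sum.cartesian_product)
  finally show ?thesis .
qed

lemma multinomial_sum_monom_eval:
  "(\<Sum>\<gamma>\<in>midx_eq n k. multinom n \<gamma> * monom_eval n x \<gamma>) = (\<Sum>i<n. x i) ^ k"
proof (induction k)
  case 0
  then show ?case by (simp add: midx_eq_0 multinom_def mdeg_def monom_eval_def)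
next
  case (Suc k)
  have "(\<Sum>\<gamma>\<in>midx_eq n (Suc k). multinom n \<gamma> * monom_eval n x \<gamma>)
      = (\<Sum>i<n. \<Sum>\<gamma>\<in>midx_eq n k. x i * (multinom n \<gamma> * monom_eval n x \<gamma>))"
    by (simp add: sum_midx_eq_Suc monom_eval_fun_upd_Suc ac_simps)
  also have "\<dots> = (\<Sum>i<n. x i) * (\<Sum>i<n. x i) ^ k"
    by (simp add: Suc sum_distrib_left[symmetric] sum_distrib_right)
  finally show ?case by simp
qed

lemma monom_eval_nonneg: "x \<in> simplex_le n \<Longrightarrow> 0 \<le> monom_eval n x \<alpha>"
  by (auto simp: monom_eval_def simplex_le_def intro!: prod_nonneg)

lemma sum_multinom_monom_eval_simplex_le_1:
  assumes "x \<in> simplex_le n"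
  shows "(\<Sum>\<gamma>\<in>midx_eq n k. multinom n \<gamma> * monom_eval n x \<gamma>) \<le> 1"
  using assms by (auto simp: multinomial_sum_monom_eval simplex_le_def intro!: power_le_one sum_nonneg)

lemma sum_multinom_abs_monom_eval_diff_le:
  assumes x1: "x1 \<in> simplex_le n" and x2: "x2 \<in> simplex_le n"
  shows "(\<Sum>\<gamma>\<in>midx_eq n k. multinom n \<gamma> * \<bar>monom_eval n x1 \<gamma> - monom_eval n x2 \<gamma>\<bar>)
     \<le> real k * (\<Sum>i<n. \<bar>x1 i - x2 i\<bar>)"
proof (induction k)
  case 0
  then show ?case by (simp add: midx_eq_0 monom_eval_def)
next
  case (Suc k)
  let ?D = "\<lambda>\<gamma>. \<bar>monom_eval n x1 \<gamma> - monom_eval n x2 \<gamma>\<bar>"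
  let ?d = "\<Sum>i<n. \<bar>x1 i - x2 i\<bar>"
  have step: "multinom n \<gamma> * \<bar>x1 i * monom_eval n x1 \<gamma> - x2 i * monom_eval n x2 \<gamma>\<bar>
      \<le> x1 i * (multinom n \<gamma> * ?D \<gamma>) + \<bar>x1 i - x2 i\<bar> * (multinom n \<gamma> * monom_eval n x2 \<gamma>)"
    if "i < n" for i \<gamma>
  proof -
    have "0 \<le> x1 i" using x1 that by (simp add: simplex_le_def)
    have "\<bar>x1 i * monom_eval n x1 \<gamma> - x2 i * monom_eval n x2 \<gamma>\<bar>
        = \<bar>x1 i * (monom_eval n x1 \<gamma> - monom_eval n x2 \<gamma>) + (x1 i - x2 i) * monom_eval n x2 \<gamma>\<bar>"
      by (simp add: algebra_simps)
    also have "\<dots> \<le> x1 i * ?D \<gamma> + \<bar>x1 i - x2 i\<bar> * monom_eval n x2 \<gamma>"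
      using \<open>0 \<le> x1 i\<close> monom_eval_nonneg[OF x2]
      by (metis abs_mult abs_of_nonneg abs_triangle_ineq)
    finally have "\<bar>x1 i * monom_eval n x1 \<gamma> - x2 i * monom_eval n x2 \<gamma>\<bar>
        \<le> x1 i * ?D \<gamma> + \<bar>x1 i - x2 i\<bar> * monom_eval n x2 \<gamma>" .
    from mult_left_mono[OF this less_imp_le[OF multinom_pos]] show ?thesis
      by (simp add: algebra_simps)
  qed
  have "(\<Sum>\<gamma>\<in>midx_eq n (Suc k). multinom n \<gamma> * ?D \<gamma>)
      = (\<Sum>i<n. \<Sum>\<gamma>\<in>midx_eq n k. multinom n \<gamma> * \<bar>x1 i * monom_eval n x1 \<gamma> - x2 i * monom_eval n x2 \<gamma>\<bar>)"
    by (simp add: sum_midx_eq_Suc monom_eval_fun_upd_Suc)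
  also have "\<dots> \<le> (\<Sum>i<n. \<Sum>\<gamma>\<in>midx_eq n k.
      x1 i * (multinom n \<gamma> * ?D \<gamma>) + \<bar>x1 i - x2 i\<bar> * (multinom n \<gamma> * monom_eval n x2 \<gamma>))"
    using step by (intro sum_mono) simp
  also have "\<dots> = (\<Sum>i<n. x1 i) * (\<Sum>\<gamma>\<in>midx_eq n k. multinom n \<gamma> * ?D \<gamma>)
      + ?d * (\<Sum>\<gamma>\<in>midx_eq n k. multinom n \<gamma> * monom_eval n x2 \<gamma>)"
    by (simp add: sum.distrib sum_distrib_left sum_distrib_right sum.swap[of _ "midx_eq n k"])
  also have "\<dots> \<le> 1 * (real k * ?d) + ?d * 1"
  proof (intro add_mono mult_mono)
    show "(\<Sum>i<n. x1 i) \<le> 1" using x1 by (simp add: simplex_le_def)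
  qed (use Suc sum_multinom_monom_eval_simplex_le_1[OF x2] monom_eval_nonneg[OF x2] in
       \<open>auto intro!: sum_nonneg mult_nonneg_nonneg less_imp_le[OF multinom_pos]\<close>)
  finally show ?case by (simp add: algebra_simps)
qed

lemma sum_multinom_abs_monom_eval_diff_midx_le:
  assumes "x1 \<in> simplex_le n" and "x2 \<in> simplex_le n"
  shows "(\<Sum>\<alpha>\<in>midx_le n d. multinom n \<alpha> * \<bar>monom_eval n x1 \<alpha> - monom_eval n x2 \<alpha>\<bar>)
     \<le> real d * (real d + 1) / 2 * (\<Sum>i<n. \<bar>x1 i - x2 i\<bar>)"
proof -
  have gauss: "(\<Sum>k\<le>d. real k) = real d * (real d + 1) / 2"
    by (induction d) (simp_all add: field_simps)
  have "(\<Sum>\<alpha>\<in>midx_le n d. multinom n \<alpha> * \<bar>monom_eval n x1 \<alpha> - monom_eval n x2 \<alpha>\<bar>)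
      \<le> (\<Sum>k\<le>d. real k * (\<Sum>i<n. \<bar>x1 i - x2 i\<bar>))"
    unfolding sum_midx_le_by_degree
    by (intro sum_mono sum_multinom_abs_monom_eval_diff_le assms)
  also have "\<dots> = real d * (real d + 1) / 2 * (\<Sum>i<n. \<bar>x1 i - x2 i\<bar>)"
    by (simp add: gauss flip: sum_distrib_right)
  finally show ?thesis .
qed

lemma bnorm_nonneg: "0 \<le> bnorm n r d m F"
proof -
  have "(\<lambda>_. 0) \<in> midx_le n d" "(\<lambda>_. 0) \<in> midx_le r m"
    by (simp_all add: midx_le_def midx_def mdeg_def)
  then have "\<bar>F (\<lambda>_. 0) (\<lambda>_. 0) / multinom n (\<lambda>_. 0)\<bar> \<le> bnorm n r d m F"
    unfolding bnorm_def by (intro Max_ge) (auto simp: finite_image_set2 finite_midx_le)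
  then show ?thesis by linarith
qed

lemma abs_coeff_le_bnorm:
  assumes "\<alpha> \<in> midx_le n d" and "\<beta> \<in> midx_le r m"
  shows "\<bar>F \<alpha> \<beta>\<bar> \<le> bnorm n r d m F * multinom n \<alpha>"
proof -
  have "\<bar>F \<alpha> \<beta> / multinom n \<alpha>\<bar> \<le> bnorm n r d m F"
    unfolding bnorm_def using assms by (intro Max_ge) (auto simp: finite_image_set2 finite_midx_le)
  then show ?thesis
    using multinom_pos[of n \<alpha>] by (simp add: abs_divide pos_divide_le_eq)
qed

lemma abs_monom_eval_sphereC_le_1:
  assumes "(y, z) \<in> sphereC r"
  shows "\<bar>monom_eval r y \<beta> * z ^ e\<bar> \<le> 1"
proof -
  have s: "(\<Sum>j<r. (y j)\<^sup>2) + z\<^sup>2 = 1" using assms by (simp add: sphereC_def)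
  then have "z\<^sup>2 \<le> 1" using sum_nonneg[of "{..<r}" "\<lambda>j. (y j)\<^sup>2"] by simp
  have "(y j)\<^sup>2 \<le> 1" if "j < r" for j
  proof -
    have "(y j)\<^sup>2 \<le> (\<Sum>j<r. (y j)\<^sup>2)" by (rule member_le_sum) (use that in auto)
    with s show ?thesis using zero_le_power2[of z] by linarith
  qed
  then have "\<bar>monom_eval r y \<beta>\<bar> \<le> 1"
    by (auto simp: monom_eval_def abs_prod power_abs abs_square_le_1
             intro!: prod_le_1 power_le_one)
  moreover have "\<bar>z ^ e\<bar> \<le> 1"
    using \<open>z\<^sup>2 \<le> 1\<close> by (simp add: power_abs abs_square_le_1 power_le_one)
  ultimately show ?thesis by (simp add: abs_mult mult_le_one)
qed

lemma sum_abs_le_sqrt_mult_enorm: "(\<Sum>i<n. \<bar>a i\<bar>) \<le> sqrt (real n) * enorm n a"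
proof -
  have "(\<Sum>i<n. \<bar>a i\<bar>)\<^sup>2 \<le> real n * (\<Sum>i<n. (a i)\<^sup>2)"
    using sum_squared_le_sum_of_squares[of "\<lambda>i. \<bar>a i\<bar>" "{..<n}"] by (simp add: mult.commute)
  then show ?thesis
    by (simp add: enorm_def real_le_rsqrt flip: real_sqrt_mult)
qed

lemma abs_homog_diff_le:
  assumes "(y, z) \<in> sphereC r"
  shows "\<bar>homog n r d m F x1 y z - homog n r d m F x2 y z\<bar>
    \<le> bnorm n r d m F * real (card (midx_le r m))
       * (\<Sum>\<alpha>\<in>midx_le n d. multinom n \<alpha> * \<bar>monom_eval n x1 \<alpha> - monom_eval n x2 \<alpha>\<bar>)"
proof -
  let ?D = "\<lambda>\<alpha>. monom_eval n x1 \<alpha> - monom_eval n x2 \<alpha>"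
  let ?w = "\<lambda>\<beta>. monom_eval r y \<beta> * z ^ (m - mdeg r \<beta>)"
  have eq: "homog n r d m F x1 y z - homog n r d m F x2 y z
      = (\<Sum>\<alpha>\<in>midx_le n d. \<Sum>\<beta>\<in>midx_le r m. F \<alpha> \<beta> * ?D \<alpha> * ?w \<beta>)"
    unfolding homog_def sum_subtractf[symmetric] by (intro sum.cong refl) (simp add: algebra_simps)
  have "\<bar>homog n r d m F x1 y z - homog n r d m F x2 y z\<bar>
      \<le> (\<Sum>\<alpha>\<in>midx_le n d. \<Sum>\<beta>\<in>midx_le r m. \<bar>F \<alpha> \<beta> * ?D \<alpha> * ?w \<beta>\<bar>)"
    unfolding eq by (intro order_trans[OF sum_abs] sum_mono sum_abs)
  also have "\<dots> = (\<Sum>\<alpha>\<in>midx_le n d. \<Sum>\<beta>\<in>midx_le r m. \<bar>F \<alpha> \<beta>\<bar> * \<bar>?D \<alpha>\<bar> * \<bar>?w \<beta>\<bar>)"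
    by (simp only: abs_mult)
  also have "\<dots> \<le> (\<Sum>\<alpha>\<in>midx_le n d. \<Sum>\<beta>\<in>midx_le r m. bnorm n r d m F * (multinom n \<alpha> * \<bar>?D \<alpha>\<bar>))"
  proof (intro sum_mono)
    fix \<alpha> \<beta> assume "\<alpha> \<in> midx_le n d" "\<beta> \<in> midx_le r m"
    have "\<bar>F \<alpha> \<beta>\<bar> * \<bar>?D \<alpha>\<bar> * \<bar>?w \<beta>\<bar> \<le> \<bar>F \<alpha> \<beta>\<bar> * \<bar>?D \<alpha>\<bar>"
      using abs_monom_eval_sphereC_le_1[OF assms] by (intro mult_left_le) simp_all
    also have "\<dots> \<le> bnorm n r d m F * multinom n \<alpha> * \<bar>?D \<alpha>\<bar>"
      using \<open>\<alpha> \<in> midx_le n d\<close> \<open>\<beta> \<in> midx_le r m\<close>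
      by (intro mult_right_mono abs_coeff_le_bnorm) simp_all
    finally show "\<bar>F \<alpha> \<beta>\<bar> * \<bar>?D \<alpha>\<bar> * \<bar>?w \<beta>\<bar> \<le> bnorm n r d m F * (multinom n \<alpha> * \<bar>?D \<alpha>\<bar>)"
      by (simp only: mult.assoc)
  qed
  also have "\<dots> = bnorm n r d m F * real (card (midx_le r m))
      * (\<Sum>\<alpha>\<in>midx_le n d. multinom n \<alpha> * \<bar>?D \<alpha>\<bar>)"
    by (simp add: sum_distrib_left[symmetric] mult.commute)
  finally show ?thesis .
qed

theorem lemma7:
  fixes n r d m :: nat and F :: "(nat \<Rightarrow> nat) \<Rightarrow> (nat \<Rightarrow> nat) \<Rightarrow> real"
  assumes "is_poly n r F" and "degX n F d" and "degY r F m"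
    and "x1 \<in> simplex_le n" and "x2 \<in> simplex_le n" and "(y, z) \<in> sphereC r"
  shows "\<bar>homog n r d m F x1 y z - homog n r d m F x2 y z\<bar>
    \<le> 1/2 * sqrt (real n) * bnorm n r d m F * real ((m + r) choose r) * real d * real (d + 1)
       * enorm n (\<lambda>i. x1 i - x2 i)"
proof -
  let ?S = "\<Sum>\<alpha>\<in>midx_le n d. multinom n \<alpha> * \<bar>monom_eval n x1 \<alpha> - monom_eval n x2 \<alpha>\<bar>"
  have "0 \<le> ?S" by (intro sum_nonneg mult_nonneg_nonneg less_imp_le[OF multinom_pos]) simp
  have "\<bar>homog n r d m F x1 y z - homog n r d m F x2 y z\<bar> \<le> bnorm n r d m F * real (card (midx_le r m)) * ?S"
    by (rule abs_homog_diff_le[OF assms(6)])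
  also have "\<dots> \<le> bnorm n r d m F * real ((m + r) choose r)
      * (real d * (real d + 1) / 2 * (sqrt (real n) * enorm n (\<lambda>i. x1 i - x2 i)))"
  proof (intro mult_mono mult_left_mono)
    show "real (card (midx_le r m)) \<le> real ((m + r) choose r)" using card_midx_le by simp
    have "?S \<le> real d * (real d + 1) / 2 * (\<Sum>i<n. \<bar>x1 i - x2 i\<bar>)"
      by (rule sum_multinom_abs_monom_eval_diff_midx_le[OF assms(4,5)])
    also have "\<dots> \<le> real d * (real d + 1) / 2 * (sqrt (real n) * enorm n (\<lambda>i. x1 i - x2 i))"
      by (intro mult_left_mono sum_abs_le_sqrt_mult_enorm) simp
    finally show "?S \<le> real d * (real d + 1) / 2 * (sqrt (real n) * enorm n (\<lambda>i. x1 i - x2 i))" .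
  qed (use \<open>0 \<le> ?S\<close> bnorm_nonneg in auto)
  also have "\<dots> = 1/2 * sqrt (real n) * bnorm n r d m F * real ((m + r) choose r) * real d * real (d + 1)
       * enorm n (\<lambda>i. x1 i - x2 i)"
    by (simp add: field_simps)
  finally show ?thesis .
qed

end
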